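(* Let $R\in\{R^L,R^C,R^V\}$ and let $\mathbf{u}$ be any utility profile. If a ballot vector $\mathbf{b}$ is a PNE of $(\mathcal{T},R,\mathbf{u})$, then for every voter $i\in N$ either $b_i=a_i$ or $b_i\in W(\mathbf{b})$.
   Context: Let $C=\{c_1,\dots,c_m\}$ be candidates and $N=\{1,\dots,n\}$ voters, each with an injective utility function $u_i:C\to\mathbb{N}$ inducing $c\succ_i c'$ iff $u_i(c)>u_i(c')$; $a_i$ is $i$'s top candidate. A ballot vector is $\mathbf{b}=(b_1,\dots,b_n)$ with $b_i\in C\cup\{\bot\}$ ($\bot$ = abstain); $(\mathbf{b}_{-i},b')$ replaces $b_i$ by $b'$. $\mathrm{sc}(c,\mathbf{b})=|\{i:b_i=c\}|$, $M(\mathbf{b})=\max_c\mathrm{sc}(c,\mathbf{b})$, $W(\mathbf{b})=\{c:\mathrm{sc}(c,\mathbf{b})=M(\mathbf{b})\}$ (equal to $C$ if all abstain). If $|W(\mathbf{b})|=1$ its element wins; otherwise: $R^L$ picks the $c_j\in W(\mathbf{b})$ with smallest index; $R^C$ picks uniformly at random from $W(\mathbf{b})$; $R^V$ picks a uniformly random voter $i\in N$ and outputs $b_i$ if $b_i\in W(\mathbf{b})$, else $i$'s most preferred candidate in $W(\mathbf{b})$. Let $p_j(\mathbf{b})$ be the probability that $c_j$ wins. Fix $0<\varepsilon<\min\{1/m,1/n\}$. In the truth-biased setting $\mathcal{T}$, voter $i$'s utility is $U_i(\mathbf{b})=\sum_jp_j(\mathbf{b})u_i(c_j)$ if $b_i\in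 C\setminus\{a_i\}$, $\sum_jp_j(\mathbf{b})u_i(c_j)+\varepsilon$ if $b_i=a_i$, and $-\infty$ if $b_i=\bot$. The game $(\mathcal{T},R,\mathbf{u})$ has players $N$ with action sets $C\cup\{\bot\}$. A PNE is a ballot vector $\mathbf{b}$ with $U_i(\mathbf{b})\ge U_i(\mathbf{b}_{-i},b')$ for all $i\in N$ and $b'\in C\cup\{\bot\}$. *)

theory Defs
  imports Complex_Main "HOL-Library.Extended_Real"
begin

text \<open>Candidates are c_1..c_m, represented by indices {1..m}; voters are {1..n}.
  A ballot vector is a function b :: nat \<Rightarrow> nat option, None meaning abstention.
  Utilities: u i j is the utility of voter i for candidate c_j.\<close>

datatype rule = RL | RC | RV

definition valid_ballot :: "nat \<Rightarrow> nat \<Rightarrow> (nat \<Rightarrow> nat option) \<Rightarrow> bool" where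
  "valid_ballot m n b \<longleftrightarrow> (\<forall>i\<in>{1..n}. b i = None \<or> (\<exists>c\<in>{1..m}. b i = Some c))"

definition sc :: "nat \<Rightarrow> (nat \<Rightarrow> nat option) \<Rightarrow> nat \<Rightarrow> nat" where
  "sc n b c = card {i\<in>{1..n}. b i = Some c}"

definition Mx :: "nat \<Rightarrow> nat \<Rightarrow> (nat \<Rightarrow> nat option) \<Rightarrow> nat" where
  "Mx m n b = Max ((\<lambda>c. sc n b c) ` {1..m})"

definition W :: "nat \<Rightarrow> nat \<Rightarrow> (nat \<Rightarrow> nat option) \<Rightarrow> nat set" where
  "W m n b = {c\<in>{1..m}. sc n b c = Mx m n b}"

definition fav :: "(nat \<Rightarrow> nat \<Rightarrow> nat) \<Rightarrow> nat \<Rightarrow> nat set \<Rightarrow> nat" where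
  "fav u i S = (THE c. c \<in> S \<and> (\<forall>d\<in>S. u i d \<le> u i c))"

definition topc :: "nat \<Rightarrow> (nat \<Rightarrow> nat \<Rightarrow> nat) \<Rightarrow> nat \<Rightarrow> nat" where
  "topc m u i = fav u i {1..m}"

text \<open>Candidate chosen by voter i under R^V when i is drawn.\<close>
definition vchoice :: "nat \<Rightarrow> nat \<Rightarrow> (nat \<Rightarrow> nat \<Rightarrow> nat) \<Rightarrow> (nat \<Rightarrow> nat option) \<Rightarrow> nat \<Rightarrow> nat" where
  "vchoice m n u b i =
     (case b i of Some c \<Rightarrow> (if c \<in> W m n b then c else fav u i (W m n b))
                | None \<Rightarrow> fav u i (W m n b))"

definition prob :: "rule \<Rightarrow> nat \<Rightarrow> nat \<Rightarrow> (nat \<Rightarrow> nat \<Rightarrow> nat) \<Rightarrow> (nat \<Rightarrow> nat option) \<Rightarrow> nat \<Rightarrow> real" where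
  "prob R m n u b j =
     (if card (W m n b) = 1 then (if j \<in> W m n b then 1 else 0)
      else (case R of
          RL \<Rightarrow> (if j = Min (W m n b) then 1 else 0)
        | RC \<Rightarrow> (if j \<in> W m n b then 1 / real (card (W m n b)) else 0)
        | RV \<Rightarrow> real (card {i\<in>{1..n}. vchoice m n u b i = j}) / real n))"

definition TU :: "rule \<Rightarrow> nat \<Rightarrow> nat \<Rightarrow> (nat \<Rightarrow> nat \<Rightarrow> nat) \<Rightarrow> real \<Rightarrow> (nat \<Rightarrow> nat option) \<Rightarrow> nat \<Rightarrow> ereal" where
  "TU R m n u \<epsilon> b i =
     (case b i of None \<Rightarrow> -\<infinity>
      | Some c \<Rightarrow> ereal ((\<Sum>j\<in>{1..m}. prob R m n u b j * real (u i j))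
                         + (if c = topc m u i then \<epsilon> else 0)))"

definition is_PNE :: "rule \<Rightarrow> nat \<Rightarrow> nat \<Rightarrow> (nat \<Rightarrow> nat \<Rightarrow> nat) \<Rightarrow> real \<Rightarrow> (nat \<Rightarrow> nat option) \<Rightarrow> bool" where
  "is_PNE R m n u \<epsilon> b \<longleftrightarrow> valid_ballot m n b \<and>
     (\<forall>i\<in>{1..n}. \<forall>b'\<in>{None} \<union> Some ` {1..m}. TU R m n u \<epsilon> b i \<ge> TU R m n u \<epsilon> (b(i := b')) i)"

end

theory Submission
  imports Defs
begin

text \<open>Abstaining yields \<open>-\<infinity>\<close>, so suppose voter \<open>i\<close> votes for some \<open>c\<close> that is neither her
  top candidate \<open>a\<close> nor a winner. Moving the vote from \<open>c\<close> to \<open>a\<close> raises the score of \<open>a\<close> by one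
  and lowers only that of the non-maximal \<open>c\<close>, so the winner set stays the same, gains \<open>a\<close>, or
  becomes \<open>{a}\<close>. As \<open>i\<close> ranks \<open>a\<close> first, none of the three tie-breaking rules lowers her
  expected utility, and the truth bias \<open>\<epsilon> > 0\<close> makes the deviation strictly profitable.\<close>

lemma fav_eqI:
  assumes "inj_on (u k) S" "x \<in> S" "\<forall>d\<in>S. u k d \<le> u k x"
  shows "fav u k S = x"
  unfolding fav_def
proof (rule the_equality)
  show "x \<in> S \<and> (\<forall>d\<in>S. u k d \<le> u k x)" using assms by auto
next
  fix y assume "y \<in> S \<and> (\<forall>d\<in>S. u k d \<le> u k y)"
  then have "y \<in> S" "u k y = u k x" using assms by (auto intro: antisym)
  then show "y = x" using assms(1,2) by (meson inj_on_def)
qed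

lemma fav_spec:
  assumes "finite S" "S \<noteq> {}" "inj_on (u k) S"
  shows "fav u k S \<in> S" "\<forall>d\<in>S. u k d \<le> u k (fav u k S)"
proof -
  have "Max (u k ` S) \<in> u k ` S" using assms(1,2) by simp
  then obtain x where x: "x \<in> S" "u k x = Max (u k ` S)" by auto
  then have max: "\<forall>d\<in>S. u k d \<le> u k x" using assms(1) by simp
  with assms(3) x(1) have "fav u k S = x" by (rule fav_eqI)
  with x(1) max show "fav u k S \<in> S" "\<forall>d\<in>S. u k d \<le> u k (fav u k S)" by simp_all
qed

lemma fav_insert:
  assumes "finite S" "S \<noteq> {}" "inj_on (u k) (insert a S)"
  shows "fav u k (insert a S) \<in> {fav u k S, a}"
proof (cases "fav u k (insert a S) = a")
  case False
  have "fav u k (insert a S) \<in> S" "\<forall>d\<in>S. u k d \<le> u k (fav u k (insert a S))"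
    using fav_spec[of "insert a S" u k] assms False by auto
  then have "fav u k S = fav u k (insert a S)"
    using fav_eqI[of u k S] assms(3) by (simp add: inj_on_insert)
  then show ?thesis by simp
qed simp

lemma topc_spec:
  assumes "m \<ge> 1" "inj_on (u i) {1..m}"
  shows "topc m u i \<in> {1..m}" "\<forall>d\<in>{1..m}. u i d \<le> u i (topc m u i)"
  using fav_spec[of "{1..m}" u i] assms unfolding topc_def by auto

definition maximizers :: "'a set \<Rightarrow> ('a \<Rightarrow> nat) \<Rightarrow> 'a set" where
  "maximizers A f = {x \<in> A. \<forall>y\<in>A. f y \<le> f x}"

text \<open>The three outcomes: \<open>a\<close> was already maximal and now wins alone, \<open>a\<close> catches up with
  the maximum, or \<open>a\<close> stays behind and nothing changes.\<close>
lemma maximizers_shift_unit: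
  fixes f g :: "'a \<Rightarrow> nat"
  assumes a: "a \<in> A" and c: "c \<in> A" "c \<notin> maximizers A f"
    and ga: "g a = Suc (f a)" and gc: "g c \<le> f c" and g: "\<forall>x\<in>A - {a, c}. g x = f x"
  shows "maximizers A g \<in> {{a}, maximizers A f, insert a (maximizers A f)}"
proof -
  obtain w where w: "w \<in> A" "f c < f w" using c unfolding maximizers_def by auto
  have g_le: "g x \<le> f x" if "x \<in> A" "x \<noteq> a" for x
    using that gc g by (cases "x = c") auto
  have c_below: "f c < g x" if "x \<in> maximizers A g" for x
  proof (cases "w = a")
    case True
    then show ?thesis using that w a ga unfolding maximizers_def by fastforce
  next
    case False
    then have "g w = f w" using g w by auto
    then show ?thesis using that w unfolding maximizers_def by fastforce
  qed
  have c_out: "c \<notin> maximizers A g"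
    using c_below gc by fastforce
  have a_iff: "a \<in> maximizers A g \<longleftrightarrow> (\<forall>y\<in>A. f y \<le> g a)"
  proof
    assume max: "a \<in> maximizers A g"
    show "\<forall>y\<in>A. f y \<le> g a"
    proof
      fix y assume "y \<in> A"
      then show "f y \<le> g a"
        using max c_below[OF max] g ga unfolding maximizers_def
        by (cases "y = a \<or> y = c") auto
    qed
  next
    assume le: "\<forall>y\<in>A. f y \<le> g a"
    have "g y \<le> g a" if "y \<in> A" for y
      using that le g_le by (cases "y = a") (auto intro: le_trans)
    then show "a \<in> maximizers A g" using a unfolding maximizers_def by simp
  qed
  have other_iff: "x \<in> maximizers A g \<longleftrightarrow> x \<in> maximizers A f \<and> g a \<le> f x"
    if x: "x \<in> A - {a, c}" for x
  proof
    assume max: "x \<in> maximizers A g"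
    have "f y \<le> f x" if "y \<in> A" for y
      using that max c_below[OF max] g x ga unfolding maximizers_def
      by (cases "y = a \<or> y = c") auto
    then show "x \<in> maximizers A f \<and> g a \<le> f x"
      using max x g a unfolding maximizers_def by auto
  next
    assume "x \<in> maximizers A f \<and> g a \<le> f x"
    then show "x \<in> maximizers A g"
      using x g g_le unfolding maximizers_def by (auto intro: le_trans)
  qed
  have g_mem: "x \<in> maximizers A g \<longleftrightarrow>
      (x = a \<and> (\<forall>y\<in>A. f y \<le> g a)) \<or> (x \<in> maximizers A f - {a, c} \<and> g a \<le> f x)" for x
    using a_iff other_iff c_out c(2) by (auto simp: maximizers_def)
  consider (top) "a \<in> maximizers A f"
    | (catch_up) "a \<notin> maximizers A f" "\<forall>y\<in>A. f y \<le> g a"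
    | (behind) y where "y \<in> A" "g a < f y"
    using a ga unfolding maximizers_def by force
  then show ?thesis
  proof cases
    case top
    then have "\<forall>y\<in>A. f y \<le> g a" "\<forall>x\<in>maximizers A f. f x < g a"
      using ga unfolding maximizers_def by auto
    then have "maximizers A g = {a}" using g_mem by fastforce
    then show ?thesis by simp
  next
    case catch_up
    have "g a \<le> f x" if "x \<in> maximizers A f" for x
      using that catch_up(1) a ga unfolding maximizers_def by force
    then have "maximizers A g = insert a (maximizers A f)"
      using g_mem catch_up c(2) by auto
    then show ?thesis by simp
  next
    case (behind y)
    have "g a < f x" if "x \<in> maximizers A f" for x
      using that behind unfolding maximizers_def by force
    then have "maximizers A g = maximizers A f"
      using g_mem behind c(2) ga by (auto simp: maximizers_def)
    then show ?thesis by simp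
  qed
qed

lemma W_eq_maximizers: "W m n b = maximizers {1..m} (sc n b)"
  unfolding W_def maximizers_def Mx_def
  by (force intro: antisym Max_ge Max_le_iff[THEN iffD2])

lemma W_subset: "W m n b \<subseteq> {1..m}"
  unfolding W_def by auto

lemma finite_W: "finite (W m n b)"
  using W_subset by (rule finite_subset) simp

lemma W_nonempty:
  assumes "m \<ge> 1"
  shows "W m n b \<noteq> {}"
proof -
  have "Mx m n b \<in> sc n b ` {1..m}" unfolding Mx_def using assms by (intro Max_in) auto
  then show ?thesis unfolding W_def by auto
qed

lemma sc_split:
  assumes "i \<in> {1..n}"
  shows "sc n b x = card {k \<in> {1..n} - {i}. b k = Some x} + of_bool (b i = Some x)"
proof -
  have "{k \<in> {1..n}. b k = Some x} =
      {k \<in> {1..n} - {i}. b k = Some x} \<union> (if b i = Some x then {i} else {})"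
    using assms by auto
  then show ?thesis unfolding sc_def by simp
qed

lemma sc_fun_upd:
  assumes "i \<in> {1..n}"
  shows "sc n (b(i := v)) x + of_bool (b i = Some x) = sc n b x + of_bool (v = Some x)"
proof -
  have "{k \<in> {1..n} - {i}. (b(i := v)) k = Some x} = {k \<in> {1..n} - {i}. b k = Some x}"
    by auto
  then show ?thesis using sc_split[OF assms, of b x] sc_split[OF assms, of "b(i := v)" x] by simp
qed

lemma W_vote_shift:
  assumes i: "i \<in> {1..n}" and a: "a \<in> {1..m}" and c: "b i = Some c" "c \<in> {1..m}" "c \<noteq> a"
    "c \<notin> W m n b"
  shows "W m n (b(i := Some a)) \<in> {{a}, W m n b, insert a (W m n b)}"
  unfolding W_eq_maximizers
proof (rule maximizers_shift_unit[OF a c(2)])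
  show "c \<notin> maximizers {1..m} (sc n b)" using c(4) unfolding W_eq_maximizers .
  show "sc n (b(i := Some a)) a = Suc (sc n b a)" "sc n (b(i := Some a)) c \<le> sc n b c"
    using sc_fun_upd[OF i, of b "Some a" a] sc_fun_upd[OF i, of b "Some a" c] c(1,3) by auto
  show "\<forall>x\<in>{1..m} - {a, c}. sc n (b(i := Some a)) x = sc n b x"
  proof
    fix x assume "x \<in> {1..m} - {a, c}"
    then show "sc n (b(i := Some a)) x = sc n b x"
      using sc_fun_upd[OF i, of b "Some a" x] c(1) by auto
  qed
qed

definition expected_utility ::
    "rule \<Rightarrow> nat \<Rightarrow> nat \<Rightarrow> (nat \<Rightarrow> nat \<Rightarrow> nat) \<Rightarrow> (nat \<Rightarrow> nat option) \<Rightarrow> nat \<Rightarrow> real" where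
  "expected_utility R m n u b i = (\<Sum>j\<in>{1..m}. prob R m n u b j * real (u i j))"

lemma TU_Some:
  "b i = Some c \<Longrightarrow>
    TU R m n u \<epsilon> b i = ereal (expected_utility R m n u b i + (if c = topc m u i then \<epsilon> else 0))"
  unfolding TU_def expected_utility_def by simp

lemma expected_utility_RL:
  assumes "m \<ge> 1"
  shows "expected_utility RL m n u b i = real (u i (Min (W m n b)))"
proof -
  have Min_in: "Min (W m n b) \<in> {1..m}"
    using Min_in[OF finite_W W_nonempty[OF assms]] W_subset by blast
  have "prob RL m n u b j = of_bool (j = Min (W m n b))" for j
  proof (cases "card (W m n b) = 1")
    case True
    then obtain w where "W m n b = {w}" by (meson card_1_singletonE)
    then show ?thesis unfolding prob_def by simp
  qed (simp add: prob_def)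
  then show ?thesis
    unfolding expected_utility_def using Min_in by (simp add: if_distrib cong: if_cong)
qed

lemma expected_utility_RC:
  "expected_utility RC m n u b i = (\<Sum>j\<in>W m n b. real (u i j)) / real (card (W m n b))"
proof -
  have "prob RC m n u b j = (if j \<in> W m n b then 1 / real (card (W m n b)) else 0)" for j
    unfolding prob_def by auto
  then have "expected_utility RC m n u b i
      = (\<Sum>j\<in>{1..m}. if j \<in> W m n b then real (u i j) / real (card (W m n b)) else 0)"
    unfolding expected_utility_def by (intro sum.cong) simp_all
  also have "\<dots> = (\<Sum>j\<in>{1..m} \<inter> W m n b. real (u i j) / real (card (W m n b)))"
    by (simp add: sum.inter_restrict)
  also have "{1..m} \<inter> W m n b = W m n b"
    using W_subset by blast
  finally show ?thesis by (simp add: sum_divide_distrib)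
qed

lemma vchoice_in_W:
  assumes "m \<ge> 1" "inj_on (u k) {1..m}"
  shows "vchoice m n u b k \<in> W m n b"
proof -
  have "inj_on (u k) (W m n b)" using assms(2) W_subset by (rule inj_on_subset)
  then have "fav u k (W m n b) \<in> W m n b"
    by (rule fav_spec(1)[OF finite_W W_nonempty[OF assms(1)]])
  then show ?thesis unfolding vchoice_def by (auto split: option.splits)
qed

lemma expected_utility_RV:
  assumes "m \<ge> 1" "n \<ge> 1" "\<forall>k\<in>{1..n}. inj_on (u k) {1..m}"
  shows "expected_utility RV m n u b i = (\<Sum>k\<in>{1..n}. real (u i (vchoice m n u b k))) / real n"
proof (cases "card (W m n b) = 1")
  case True
  then obtain w where w: "W m n b = {w}" by (meson card_1_singletonE)
  then have "w \<in> {1..m}" using W_subset by blast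
  moreover have "vchoice m n u b k = w" if "k \<in> {1..n}" for k
    using vchoice_in_W[OF assms(1)] assms(3) that w by blast
  moreover have "prob RV m n u b j = of_bool (j = w)" for j
    unfolding prob_def using True w by simp
  ultimately show ?thesis
    using assms(2) unfolding expected_utility_def by (simp add: if_distrib cong: if_cong)
next
  case False
  have choices: "vchoice m n u b ` {1..n} \<subseteq> {1..m}"
    using vchoice_in_W[OF assms(1)] assms(3) W_subset by blast
  have "expected_utility RV m n u b i
      = (\<Sum>j\<in>{1..m}. \<Sum>k\<in>{k\<in>{1..n}. vchoice m n u b k = j}. real (u i j)) / real n"
    unfolding expected_utility_def prob_def sum_divide_distrib using False by simp
  also have "\<dots> = (\<Sum>k\<in>{1..n}. real (u i (vchoice m n u b k))) / real n"
    using sum.group[OF _ _ choices, of "\<lambda>k. real (u i (vchoice m n u b k))"] by simp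
  finally show ?thesis .
qed

lemma Min_shift:
  assumes "finite S" "S \<noteq> {}" "S' \<in> {{a}, S, insert a S}"
  shows "Min S' \<in> {Min S, a}"
proof -
  have "Min (insert a S) = min a (Min S)" using assms(1,2) by simp
  then show ?thesis using assms(3) by (auto simp: min_def)
qed

lemma mean_le_mean_shift:
  fixes g :: "'a \<Rightarrow> real"
  assumes S: "finite S" "S \<noteq> {}" and a_max: "\<forall>x\<in>S. g x \<le> g a"
    and S': "S' \<in> {{a}, S, insert a S}"
  shows "sum g S / card S \<le> sum g S' / card S'"
proof -
  have k: "real (card S) > 0" using S by (simp add: card_gt_0_iff)
  have bound: "sum g S \<le> card S * g a"
    using sum_bounded_above[of S g "g a"] a_max by simp
  consider "S' = {a}" | "S' = S" | "a \<notin> S" "S' = insert a S"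
    using S' by auto
  then show ?thesis
  proof cases
    case 1
    then show ?thesis using bound k by (simp add: pos_divide_le_eq mult.commute)
  next
    case 3
    have "sum g S * (card S + 1) \<le> (sum g S + g a) * card S"
      using bound by (simp add: algebra_simps)
    then show ?thesis using 3 S k by (simp add: field_simps)
  qed simp
qed

lemma vchoice_vote_shift:
  assumes m: "m \<ge> 1" and inj: "inj_on (u k) {1..m}" and a: "a \<in> {1..m}"
    and c: "b i = Some c" "c \<notin> W m n b"
    and W': "W m n (b(i := Some a)) \<in> {{a}, W m n b, insert a (W m n b)}"
  shows "vchoice m n u (b(i := Some a)) k \<in> {vchoice m n u b k, a}"
proof -
  consider "W m n (b(i := Some a)) = {a}" | "W m n (b(i := Some a)) = W m n b"
    | "W m n (b(i := Some a)) = insert a (W m n b)"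
    using W' by blast
  then show ?thesis
  proof cases
    case 1
    then show ?thesis using vchoice_in_W[of m u k n "b(i := Some a)", OF m inj] by simp
  next
    case 2
    show ?thesis
    proof (cases "k = i")
      case True
      then show ?thesis using c unfolding vchoice_def 2 by simp
    next
      case False
      then show ?thesis unfolding vchoice_def 2 by simp
    qed
  next
    case 3
    have "insert a (W m n b) \<subseteq> {1..m}" using a W_subset by blast
    then have "inj_on (u k) (insert a (W m n b))" by (rule inj_on_subset[OF inj])
    then have fav: "fav u k (insert a (W m n b)) \<in> {fav u k (W m n b), a}"
      by (rule fav_insert[OF finite_W W_nonempty[OF m]])
    show ?thesis
    proof (cases "k = i")
      case True
      then show ?thesis unfolding vchoice_def 3 by simp
    next
      case False
      then show ?thesis using fav unfolding vchoice_def 3 by (simp split: option.split)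
    qed
  qed
qed

lemma expected_utility_RL_shift_mono:
  assumes m: "m \<ge> 1" and a_best: "\<forall>x\<in>W m n b. u i x \<le> u i a"
    and W': "W m n b' \<in> {{a}, W m n b, insert a (W m n b)}"
  shows "expected_utility RL m n u b i \<le> expected_utility RL m n u b' i"
proof -
  have "Min (W m n b) \<in> W m n b" by (rule Min_in[OF finite_W W_nonempty[OF m]])
  moreover have "Min (W m n b') \<in> {Min (W m n b), a}"
    by (rule Min_shift[OF finite_W W_nonempty[OF m] W'])
  ultimately have "u i (Min (W m n b)) \<le> u i (Min (W m n b'))" using a_best by auto
  then show ?thesis unfolding expected_utility_RL[OF m] by simp
qed

lemma expected_utility_RC_shift_mono:
  assumes m: "m \<ge> 1" and a_best: "\<forall>x\<in>W m n b. u i x \<le> u i a"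
    and W': "W m n b' \<in> {{a}, W m n b, insert a (W m n b)}"
  shows "expected_utility RC m n u b i \<le> expected_utility RC m n u b' i"
  unfolding expected_utility_RC
  using mean_le_mean_shift[OF finite_W W_nonempty[OF m] _ W', of "\<lambda>x. real (u i x)"] a_best
  by simp

lemma expected_utility_RV_vote_shift_mono:
  assumes m: "m \<ge> 1" and n: "n \<ge> 1" and inj: "\<forall>k\<in>{1..n}. inj_on (u k) {1..m}"
    and a: "a \<in> {1..m}" and a_best: "\<forall>x\<in>W m n b. u i x \<le> u i a"
    and c: "b i = Some c" "c \<notin> W m n b"
    and W': "W m n (b(i := Some a)) \<in> {{a}, W m n b, insert a (W m n b)}"
  shows "expected_utility RV m n u b i \<le> expected_utility RV m n u (b(i := Some a)) i"
proof -
  have "u i (vchoice m n u b k) \<le> u i (vchoice m n u (b(i := Some a)) k)"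
    if k: "k \<in> {1..n}" for k
  proof -
    have inj_k: "inj_on (u k) {1..m}" using inj k by blast
    have "vchoice m n u b k \<in> W m n b" by (rule vchoice_in_W[of m u k, OF m inj_k])
    moreover have "vchoice m n u (b(i := Some a)) k \<in> {vchoice m n u b k, a}"
      by (rule vchoice_vote_shift[where u = u and k = k and b = b and i = i, OF m inj_k a c W'])
    ultimately show ?thesis using a_best by auto
  qed
  then have "(\<Sum>k\<in>{1..n}. real (u i (vchoice m n u b k)))
      \<le> (\<Sum>k\<in>{1..n}. real (u i (vchoice m n u (b(i := Some a)) k)))"
    by (intro sum_mono) simp
  then show ?thesis
    unfolding expected_utility_RV[OF m n inj] by (rule divide_right_mono) simp
qed

lemma expected_utility_vote_for_top_mono:
  assumes m: "m \<ge> 1" and n: "n \<ge> 1" and inj: "\<forall>k\<in>{1..n}. inj_on (u k) {1..m}"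
    and i: "i \<in> {1..n}" and c: "b i = Some c" "c \<in> {1..m}" "c \<noteq> topc m u i" "c \<notin> W m n b"
  shows "expected_utility R m n u b i \<le> expected_utility R m n u (b(i := Some (topc m u i))) i"
proof -
  define a where "a = topc m u i"
  have a: "a \<in> {1..m}" "\<forall>d\<in>{1..m}. u i d \<le> u i a"
    using topc_spec[OF m] inj i unfolding a_def by auto
  then have a_best: "\<forall>x\<in>W m n b. u i x \<le> u i a" using W_subset by blast
  have W': "W m n (b(i := Some a)) \<in> {{a}, W m n b, insert a (W m n b)}"
    using W_vote_shift[of i n a m b c] i a(1) c a_def by simp
  show ?thesis
    unfolding a_def[symmetric]
    using expected_utility_RL_shift_mono[where u = u and i = i, OF m a_best W']
      expected_utility_RC_shift_mono[where u = u and i = i, OF m a_best W']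
      expected_utility_RV_vote_shift_mono[where u = u and i = i, OF m n inj a(1) a_best c(1,4) W']
    by (cases R) simp_all
qed

lemma TU_vote_for_top_gain:
  assumes m: "m \<ge> 1" and n: "n \<ge> 1" and inj: "\<forall>k\<in>{1..n}. inj_on (u k) {1..m}"
    and \<epsilon>: "0 < \<epsilon>" and i: "i \<in> {1..n}"
    and b_i: "b i = None \<or> (\<exists>c\<in>{1..m}. b i = Some c \<and> c \<noteq> topc m u i \<and> c \<notin> W m n b)"
  shows "TU R m n u \<epsilon> b i < TU R m n u \<epsilon> (b(i := Some (topc m u i))) i"
proof -
  let ?b' = "b(i := Some (topc m u i))"
  have TU': "TU R m n u \<epsilon> ?b' i = ereal (expected_utility R m n u ?b' i + \<epsilon>)"
    by (simp add: TU_Some)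
  from b_i show ?thesis
  proof
    assume "b i = None"
    then show ?thesis unfolding TU' by (simp add: TU_def)
  next
    assume "\<exists>c\<in>{1..m}. b i = Some c \<and> c \<noteq> topc m u i \<and> c \<notin> W m n b"
    then obtain c where c: "b i = Some c" "c \<in> {1..m}" "c \<noteq> topc m u i" "c \<notin> W m n b"
      by blast
    then have "TU R m n u \<epsilon> b i = ereal (expected_utility R m n u b i)" by (simp add: TU_Some)
    then show ?thesis
      unfolding TU' using expected_utility_vote_for_top_mono[OF m n inj i c, of R] \<epsilon> by simp
  qed
qed

theorem proposition2:
  fixes R :: rule and m n :: nat and u :: "nat \<Rightarrow> nat \<Rightarrow> nat" and \<epsilon> :: real
    and b :: "nat \<Rightarrow> nat option"
  assumes "m \<ge> 1" and "n \<ge> 1"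
    and "\<forall>i\<in>{1..n}. inj_on (u i) {1..m}"
    and "0 < \<epsilon>" and "\<epsilon> < min (1 / real m) (1 / real n)"
    and "is_PNE R m n u \<epsilon> b"
  shows "\<forall>i\<in>{1..n}. b i = Some (topc m u i) \<or> (\<exists>c\<in>W m n b. b i = Some c)"
proof
  fix i assume i: "i \<in> {1..n}"
  have valid: "b i = None \<or> (\<exists>c\<in>{1..m}. b i = Some c)"
    using assms(6) i unfolding is_PNE_def valid_ballot_def by blast
  have top: "topc m u i \<in> {1..m}" using topc_spec(1) assms(1,3) i by blast
  have no_gain: "TU R m n u \<epsilon> (b(i := Some (topc m u i))) i \<le> TU R m n u \<epsilon> b i"
    using assms(6) i top unfolding is_PNE_def by blast
  show "b i = Some (topc m u i) \<or> (\<exists>c\<in>W m n b. b i = Some c)"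
  proof (rule ccontr)
    assume "\<not> ?thesis"
    with valid have "b i = None \<or> (\<exists>c\<in>{1..m}. b i = Some c \<and> c \<noteq> topc m u i \<and> c \<notin> W m n b)"
      by blast
    with TU_vote_for_top_gain[OF assms(1-4) i] no_gain show False by (simp add: not_le[symmetric])
  qed
qed

end
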